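(* Let $\mathbf{S}_1, \mathbf{S}_2, \mathbf{S}_3 \subset \mathbb{R}^2$ be pairwise disjoint sets with $|\mathbf{S}_i| = 3$ for each $i$, such that the points of $\mathbf{S}_1\cup\mathbf{S}_2\cup\mathbf{S}_3\cup\{0\}$ are in general position (with $0 \notin \bigcup_i \mathbf{S}_i$) and $0 \in \operatorname{conv}(\mathbf{S}_i \cup \mathbf{S}_j)$ for all $i \neq j$. Then at least $3$ colourful triangles contain $0$. Moreover this bound is attained, i.e. $\mu^\Diamond(2) = 3$.
   Context: A colourful triangle is $\operatorname{conv}\{x_1,x_2,x_3\}$ with $x_i \in \mathbf{S}_i$ for each $i$ (closed); distinct choices of $(x_1,x_2,x_3)$ count as distinct. $\mu^\Diamond(d)$ denotes the minimum, over all configurations of pairwise disjoint sets $\mathbf{S}_1,\dots,\mathbf{S}_{d+1}\subset\mathbb{R}^d$ with $|\mathbf{S}_i|=d+1$, in general position together with $0$, satisfying $0 \in \operatorname{conv}(\mathbf{S}_i \cup \mathbf{S}_j)$ for all $i\ne j$, of the number of colourful simplices (one vertex from each $\mathbf{S}_i$) containing $0$. *)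

theory Defs
  imports "HOL-Analysis.Analysis"
begin

definition gen_pos2 :: "(real^2) set \<Rightarrow> bool" where
  "gen_pos2 P \<longleftrightarrow> (\<forall>T. T \<subseteq> P \<and> card T \<le> 3 \<longrightarrow> \<not> affine_dependent T)"

definition admissible_config :: "(real^2) set \<Rightarrow> (real^2) set \<Rightarrow> (real^2) set \<Rightarrow> bool" where
  "admissible_config S1 S2 S3 \<longleftrightarrow>
     card S1 = 3 \<and> card S2 = 3 \<and> card S3 = 3 \<and>
     S1 \<inter> S2 = {} \<and> S1 \<inter> S3 = {} \<and> S2 \<inter> S3 = {} \<and>
     0 \<notin> S1 \<union> S2 \<union> S3 \<and>
     gen_pos2 (S1 \<union> S2 \<union> S3 \<union> {0}) \<and>
     0 \<in> convex hull (S1 \<union> S2) \<and> 0 \<in> convex hull (S1 \<union> S3) \<and>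
     0 \<in> convex hull (S2 \<union> S3)"

definition colourful_count :: "(real^2) set \<Rightarrow> (real^2) set \<Rightarrow> (real^2) set \<Rightarrow> nat" where
  "colourful_count S1 S2 S3 =
     card {(x1, x2, x3). x1 \<in> S1 \<and> x2 \<in> S2 \<and> x3 \<in> S3 \<and>
                         0 \<in> convex hull {x1, x2, x3}}"

end

theory Submission
  imports Defs
begin

(* Everything is reduced to signs of 2x2 determinants det2 x y.  For a nondegenerate
   triangle, the origin lies in it iff its edge determinants have a common sign
   (winds x y z).  Two facts about such triangles drive the proof:

   (1) Existence.  If 0 lies in the hull of S_i and S_j for all i, j, some colourful
       triangle contains 0.  Caratheodory gives a triangle from S_1 and S_2 containing 0;
       the exchange lemma (replacing one vertex by an outside point keeps 0 in one of the
       three new triangles) makes it bichromatic, and then either a colourful triangle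
       exists, or all of S_2 and S_3 (or S_1 and S_3) lie in an open half-plane through 0,
       contradicting the hypotheses.

   (2) Parity.  By ray casting, winds x y z is the exclusive-or of three edge terms, so
       in every box {a,a'} x {b,b'} x {c,c'} of colourful triples an even number of
       triangles contain 0.  Hence one colourful triangle forces at least three.

   The bound is attained by an explicit configuration, checked by computation. *)

text \<open>The determinant of two plane vectors: positive iff \<open>y\<close> lies counterclockwise of \<open>x\<close>.\<close>
definition det2 :: "real^2 \<Rightarrow> real^2 \<Rightarrow> real" where
  "det2 x y = x$1 * y$2 - x$2 * y$1"

lemma det2_swap: "det2 y x = - det2 x y"
  by (simp add: det2_def)

lemma vec2_eq_iff: "(x::real^2) = y \<longleftrightarrow> x$1 = y$1 \<and> x$2 = y$2"
  by (simp add: vec_eq_iff forall_2)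

lemma det2_cramer: "det2 y z *\<^sub>R x + det2 z x *\<^sub>R y + det2 x y *\<^sub>R z = 0"
  by (simp add: vec2_eq_iff det2_def algebra_simps)

text \<open>The boundary of the triangle \<open>x y z\<close> turns around the origin in a constant sense.\<close>
definition winds :: "real^2 \<Rightarrow> real^2 \<Rightarrow> real^2 \<Rightarrow> bool" where
  "winds x y z \<longleftrightarrow> (0 < det2 x y \<longleftrightarrow> 0 < det2 y z) \<and> (0 < det2 y z \<longleftrightarrow> 0 < det2 z x)"

lemma vanishing_combination_proportional:
  assumes "u *\<^sub>R x + v *\<^sub>R y + w *\<^sub>R z = 0"
  shows "v * det2 x y = w * det2 z x" "w * det2 y z = u * det2 x y" "u * det2 z x = v * det2 y z"
proof -
  have c1: "u * x$1 + v * y$1 + w * z$1 = 0" and c2: "u * x$2 + v * y$2 + w * z$2 = 0"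
    using assms by (auto simp: vec2_eq_iff)
  have "v * det2 x y - w * det2 z x = x$1 * (u * x$2 + v * y$2 + w * z$2) - x$2 * (u * x$1 + v * y$1 + w * z$1)"
    "w * det2 y z - u * det2 x y = y$1 * (u * x$2 + v * y$2 + w * z$2) - y$2 * (u * x$1 + v * y$1 + w * z$1)"
    "u * det2 z x - v * det2 y z = z$1 * (u * x$2 + v * y$2 + w * z$2) - z$2 * (u * x$1 + v * y$1 + w * z$1)"
    by (simp_all add: det2_def algebra_simps)
  then show "v * det2 x y = w * det2 z x" "w * det2 y z = u * det2 x y" "u * det2 z x = v * det2 y z"
    using c1 c2 by simp_all
qed

lemma origin_in_triangle_iff_winds:
  assumes nz: "det2 x y \<noteq> 0" "det2 y z \<noteq> 0" "det2 z x \<noteq> 0"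
  shows "0 \<in> convex hull {x, y, z} \<longleftrightarrow> winds x y z"
proof
  assume "0 \<in> convex hull {x, y, z}"
  then obtain u v w where uvw: "0 \<le> u" "0 \<le> v" "0 \<le> w" "u + v + w = 1"
    and comb: "u *\<^sub>R x + v *\<^sub>R y + w *\<^sub>R z = 0"
    by (auto simp: convex_hull_3)
  note ratios = vanishing_combination_proportional[OF comb]
  have "u \<noteq> 0 \<and> v \<noteq> 0 \<and> w \<noteq> 0"
    using ratios nz uvw by auto
  then have "0 < u" "0 < v" "0 < w"
    using uvw by auto
  then have "0 < det2 x y \<longleftrightarrow> 0 < det2 z x" "0 < det2 y z \<longleftrightarrow> 0 < det2 x y"
    using ratios(1,2) by (metis mult_pos_pos zero_less_mult_pos)+
  then show "winds x y z"
    unfolding winds_def by blast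
next
  assume "winds x y z"
  then have sgn: "(0 < det2 y z \<and> 0 < det2 z x \<and> 0 < det2 x y) \<or>
                  (det2 y z < 0 \<and> det2 z x < 0 \<and> det2 x y < 0)"
    using nz unfolding winds_def by linarith
  define s where "s = det2 y z + det2 z x + det2 x y"
  have "s \<noteq> 0"
    using sgn unfolding s_def by linarith
  have "(det2 y z / s) *\<^sub>R x + (det2 z x / s) *\<^sub>R y + (det2 x y / s) *\<^sub>R z
      = (1 / s) *\<^sub>R (det2 y z *\<^sub>R x + det2 z x *\<^sub>R y + det2 x y *\<^sub>R z)"
    by (simp add: scaleR_add_right)
  also have "\<dots> = 0"
    by (simp add: det2_cramer)
  finally have "(det2 y z / s) *\<^sub>R x + (det2 z x / s) *\<^sub>R y + (det2 x y / s) *\<^sub>R z = 0" .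
  moreover have "0 \<le> det2 y z / s" "0 \<le> det2 z x / s" "0 \<le> det2 x y / s"
    "det2 y z / s + det2 z x / s + det2 x y / s = 1"
    using sgn \<open>s \<noteq> 0\<close> unfolding s_def by (auto simp: divide_simps)
  ultimately show "0 \<in> convex hull {x, y, z}"
    unfolding convex_hull_3 by (smt (verit) mem_Collect_eq)
qed

definition origin_generic :: "(real^2) set \<Rightarrow> bool" where
  "origin_generic P \<longleftrightarrow> (\<forall>u\<in>P. \<forall>v\<in>P. u \<noteq> v \<longrightarrow> det2 u v \<noteq> 0)"

lemma origin_generic_det2:
  "origin_generic P \<Longrightarrow> u \<in> P \<Longrightarrow> v \<in> P \<Longrightarrow> u \<noteq> v \<Longrightarrow> det2 u v \<noteq> 0"
  unfolding origin_generic_def by blast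

lemma origin_generic_triangle:
  assumes "origin_generic P" "x \<in> P" "y \<in> P" "z \<in> P" "x \<noteq> y" "y \<noteq> z" "z \<noteq> x"
  shows "0 \<in> convex hull {x, y, z} \<longleftrightarrow> winds x y z"
  by (rule origin_in_triangle_iff_winds) (use assms origin_generic_det2 in auto)

lemma winds_exchange:
  assumes nz: "det2 y z \<noteq> 0" "det2 z p \<noteq> 0" "det2 p y \<noteq> 0"
    "det2 q y \<noteq> 0" "det2 q z \<noteq> 0" "det2 q p \<noteq> 0"
    and "winds y z p"
  shows "winds q y z \<or> winds q z p \<or> winds q p y"
proof (rule ccontr)
  assume none: "\<not> ?thesis"
  have edges: "(0 < det2 y z \<and> 0 < det2 z p \<and> 0 < det2 p y) \<or> (det2 y z < 0 \<and> det2 z p < 0 \<and> det2 p y < 0)"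
    using assms unfolding winds_def by (smt (verit))
  have "(0 < det2 q y \<and> 0 < det2 q z \<and> 0 < det2 q p) \<or> (det2 q y < 0 \<and> det2 q z < 0 \<and> det2 q p < 0)"
    using none edges nz unfolding winds_def det2_swap[of z q] det2_swap[of p q] det2_swap[of y q]
    by (smt (verit))
  then have "(0 < det2 z p * det2 q y \<and> 0 < det2 p y * det2 q z \<and> 0 < det2 y z * det2 q p) \<or>
             (det2 z p * det2 q y < 0 \<and> det2 p y * det2 q z < 0 \<and> det2 y z * det2 q p < 0)"
    using edges by (auto simp: zero_less_mult_iff mult_less_0_iff)
  moreover have "det2 z p * det2 q y + det2 p y * det2 q z + det2 y z * det2 q p = 0"
    by (simp add: det2_def algebra_simps)
  ultimately show False
    by linarith
qed

lemma origin_generic_exchange: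
  assumes "origin_generic P" "q \<in> P" "y \<in> P" "z \<in> P" "p \<in> P"
    and "q \<notin> {y, z, p}" "y \<noteq> z" "z \<noteq> p" "p \<noteq> y"
    and "0 \<in> convex hull {y, z, p}"
  shows "0 \<in> convex hull {q, y, z} \<or> 0 \<in> convex hull {q, z, p} \<or> 0 \<in> convex hull {q, p, y}"
proof -
  have triangle_iff: "0 \<in> convex hull {y, z, p} \<longleftrightarrow> winds y z p"
    "0 \<in> convex hull {q, y, z} \<longleftrightarrow> winds q y z" "0 \<in> convex hull {q, z, p} \<longleftrightarrow> winds q z p"
    "0 \<in> convex hull {q, p, y} \<longleftrightarrow> winds q p y"
    by (rule origin_generic_triangle[OF assms(1)]; use assms in auto)+
  have "winds y z p"
    using assms(10) triangle_iff(1) by blast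
  moreover have "det2 y z \<noteq> 0" "det2 z p \<noteq> 0" "det2 p y \<noteq> 0"
    "det2 q y \<noteq> 0" "det2 q z \<noteq> 0" "det2 q p \<noteq> 0"
    using assms origin_generic_det2 by auto
  ultimately have "winds q y z \<or> winds q z p \<or> winds q p y"
    using winds_exchange by blast
  then show ?thesis
    using triangle_iff by blast
qed

text \<open>The triangles \<open>p m m'\<close> containing the origin have their free vertex \<open>p\<close> in a fixed
  open half-plane through the origin, namely the one on which the linear form
  \<open>p \<mapsto> det2 p (det2 m m' *\<^sub>R (m - m'))\<close> is positive.\<close>
lemma convex_det2_halfplane: "convex {p. 0 < det2 p d}"
proof -
  have "linear (\<lambda>p. det2 p d)"
    by (rule linearI) (simp_all add: det2_def algebra_simps)
  then have "convex ((\<lambda>p. det2 p d) -` {0<..})"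
    using convex_linear_vimage convex_real_interval(3) by blast
  then show ?thesis
    by (simp add: vimage_def)
qed

lemma winds_halfplane:
  assumes "det2 p m \<noteq> 0" "det2 m m' \<noteq> 0" "det2 m' p \<noteq> 0" "winds p m m'"
  shows "0 < det2 p (det2 m m' *\<^sub>R (m - m'))"
proof -
  have "det2 p (det2 m m' *\<^sub>R (m - m')) = det2 m m' * (det2 p m + det2 m' p)"
    by (simp add: det2_def algebra_simps)
  moreover have "(0 < det2 m m' \<and> 0 < det2 p m + det2 m' p) \<or> (det2 m m' < 0 \<and> det2 p m + det2 m' p < 0)"
    using assms unfolding winds_def by linarith
  ultimately show ?thesis
    by (auto simp: zero_less_mult_iff)
qed

lemma origin_outside_hull_if_all_wind:
  assumes gen: "origin_generic P" and m: "m \<in> P" "m' \<in> P" "m \<noteq> m'"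
    and Q: "Q \<subseteq> P - {m, m'}" "\<forall>p\<in>Q. 0 \<in> convex hull {p, m, m'}"
  shows "0 \<notin> convex hull Q"
proof
  define d where "d = det2 m m' *\<^sub>R (m - m')"
  have "Q \<subseteq> {p. 0 < det2 p d}"
  proof
    fix p assume "p \<in> Q"
    then have "p \<in> P" "p \<noteq> m" "p \<noteq> m'" "0 \<in> convex hull {p, m, m'}"
      using Q by auto
    then show "p \<in> {p. 0 < det2 p d}"
      using winds_halfplane origin_generic_triangle[OF gen] origin_generic_det2[OF gen] m
      unfolding d_def by (metis mem_Collect_eq)
  qed
  then have "convex hull Q \<subseteq> {p. 0 < det2 p d}"
    by (rule hull_minimal) (rule convex_det2_halfplane)
  moreover assume "0 \<in> convex hull Q"
  ultimately show False
    by (auto simp: det2_def)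
qed

text \<open>In a generic set avoiding the origin no segment contains the origin, so by
  Caratheodory's theorem a hull containing the origin contains it in a triangle.\<close>
lemma origin_generic_no_segment:
  assumes gen: "origin_generic P" and "0 \<notin> P" "a \<in> P" "b \<in> P"
  shows "0 \<notin> convex hull {a, b}"
proof
  assume "0 \<in> convex hull {a, b}"
  then obtain u v where uv: "0 \<le> u" "0 \<le> v" "u + v = 1" and comb: "u *\<^sub>R a + v *\<^sub>R b = 0"
    by (auto simp: convex_hull_2)
  have "v = 0 \<or> a = b"
    using vanishing_combination_proportional(1)[of u a v b 0 a] comb origin_generic_det2[OF gen] assms
    by auto
  then have "a = 0"
    using comb uv by (auto simp flip: scaleR_add_left)
  then show False
    using assms by simp
qed

lemma subset_pair_if_card_le_2:
  assumes "finite T" "card T \<le> 2" "t \<in> T"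
  shows "\<exists>t'\<in>T. T \<subseteq> {t, t'}"
proof (cases "T - {t} = {}")
  case True
  then show ?thesis
    using assms(3) by blast
next
  case False
  then obtain t' where t': "t' \<in> T - {t}"
    by blast
  have "card (T - {t}) \<le> Suc 0"
    using assms by simp
  then have "\<forall>u\<in>T - {t}. u = t'"
    using t' assms(1) card_le_Suc0_iff_eq by (metis finite_Diff)
  then show ?thesis
    using t' by blast
qed

lemma origin_generic_caratheodory:
  assumes gen: "origin_generic P" and "0 \<notin> P" "S \<subseteq> P" "0 \<in> convex hull S"
  shows "\<exists>x\<in>S. \<exists>y\<in>S. \<exists>z\<in>S. x \<noteq> y \<and> y \<noteq> z \<and> z \<noteq> x \<and> 0 \<in> convex hull {x, y, z}"
proof -
  obtain T where T: "finite T" "T \<subseteq> S" "card T \<le> 3" "0 \<in> convex hull T"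
    using assms(4) caratheodory[of S] by auto
  then obtain t where t: "t \<in> T"
    by fastforce
  have "card T = 3"
  proof (rule ccontr)
    assume "card T \<noteq> 3"
    then obtain t' where "t' \<in> T" "T \<subseteq> {t, t'}"
      using subset_pair_if_card_le_2[OF T(1) _ t] T(3) by force
    then have "0 \<in> convex hull {t, t'}"
      using T(4) hull_mono by blast
    then show False
      using origin_generic_no_segment[OF gen assms(2)] \<open>t' \<in> T\<close> t T(2) assms(3) by blast
  qed
  then obtain x y z where "T = {x, y, z}" "x \<noteq> y" "y \<noteq> z" "x \<noteq> z"
    by (auto simp: card_3_iff)
  then show ?thesis
    using T(2,4) by blast
qed

lemma triangle_third_vertex:
  assumes "a \<in> {x, y, z}" "b \<in> {x, y, z}" "a \<noteq> b" "x \<noteq> y" "y \<noteq> z" "z \<noteq> x"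
  shows "\<exists>r\<in>{x, y, z}. r \<noteq> a \<and> r \<noteq> b \<and> {x, y, z} = {a, b, r}"
  using assms by auto

text \<open>A monochromatic
  triangle from Caratheodory's theorem is repaired by the exchange lemma.\<close>
lemma bichromatic_triangle:
  assumes gen: "origin_generic P" "0 \<notin> P"
    and AB: "A \<subseteq> P" "B \<subseteq> P" "A \<inter> B = {}" "A \<noteq> {}" "B \<noteq> {}"
    and hull: "0 \<in> convex hull (A \<union> B)"
  shows "\<exists>a\<in>A. \<exists>b\<in>B. \<exists>r\<in>A \<union> B. r \<noteq> a \<and> r \<noteq> b \<and> 0 \<in> convex hull {a, b, r}"
proof -
  have from_mixed: ?thesis
    if xyz: "0 \<in> convex hull {x, y, z}" "{x, y, z} \<subseteq> A \<union> B" "x \<noteq> y" "y \<noteq> z" "z \<noteq> x"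
      and ab: "a \<in> {x, y, z} \<inter> A" "b \<in> {x, y, z} \<inter> B" for x y z a b
  proof -
    have "a \<noteq> b"
      using ab AB(3) by blast
    then obtain r where r: "r \<in> {x, y, z}" "r \<noteq> a" "r \<noteq> b" "{x, y, z} = {a, b, r}"
      using triangle_third_vertex[of a x y z b] xyz ab by blast
    have "a \<in> A" "b \<in> B" "r \<in> A \<union> B" "0 \<in> convex hull {a, b, r}"
      using ab r xyz by auto
    then show ?thesis
      using r by blast
  qed
  have exchange_pair: "\<exists>u\<in>{x, y, z}. \<exists>v\<in>{x, y, z}. u \<noteq> v \<and> 0 \<in> convex hull {q, u, v}"
    if "0 \<in> convex hull {x, y, z}" "{q, x, y, z} \<subseteq> P" "q \<notin> {x, y, z}" "x \<noteq> y" "y \<noteq> z" "z \<noteq> x"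
    for q x y z
  proof -
    have "0 \<in> convex hull {q, x, y} \<or> 0 \<in> convex hull {q, y, z} \<or> 0 \<in> convex hull {q, z, x}"
      by (rule origin_generic_exchange[OF gen(1)]) (use that in auto)
    then show ?thesis
      using that(4-6) by blast
  qed
  obtain x y z where xyz: "{x, y, z} \<subseteq> A \<union> B" "x \<noteq> y" "y \<noteq> z" "z \<noteq> x" "0 \<in> convex hull {x, y, z}"
    using origin_generic_caratheodory[OF gen, of "A \<union> B"] AB hull by auto
  consider "{x, y, z} \<subseteq> A" | "{x, y, z} \<subseteq> B" | a b where "a \<in> {x, y, z} \<inter> A" "b \<in> {x, y, z} \<inter> B"
    using xyz(1) by blast
  then show ?thesis
  proof cases
    case 1
    obtain b where b: "b \<in> B"
      using AB(5) by blast
    have "{b, x, y, z} \<subseteq> P" "b \<notin> {x, y, z}"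
      using b 1 AB by auto
    from exchange_pair[OF xyz(5) this xyz(2-4)]
    obtain u v where uv: "u \<in> {x, y, z}" "v \<in> {x, y, z}" "u \<noteq> v" "0 \<in> convex hull {b, u, v}"
      by blast
    have "{b, u, v} \<subseteq> A \<union> B" "b \<noteq> u" "v \<noteq> b" "u \<in> {b, u, v} \<inter> A" "b \<in> {b, u, v} \<inter> B"
      using uv b 1 AB(3) by auto
    then show ?thesis
      using from_mixed[OF uv(4)] uv(3) by blast
  next
    case 2
    obtain a where a: "a \<in> A"
      using AB(4) by blast
    have "{a, x, y, z} \<subseteq> P" "a \<notin> {x, y, z}"
      using a 2 AB by auto
    from exchange_pair[OF xyz(5) this xyz(2-4)]
    obtain u v where uv: "u \<in> {x, y, z}" "v \<in> {x, y, z}" "u \<noteq> v" "0 \<in> convex hull {a, u, v}"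
      by blast
    have "{a, u, v} \<subseteq> A \<union> B" "a \<noteq> u" "v \<noteq> a" "a \<in> {a, u, v} \<inter> A" "u \<in> {a, u, v} \<inter> B"
      using uv a 2 AB(3) by auto
    then show ?thesis
      using from_mixed[OF uv(4)] uv(3) by blast
  next
    case 3
    then show ?thesis
      using from_mixed[OF xyz(5,1-4)] by blast
  qed
qed

text \<open>Otherwise the
  exchange lemma pushes every point of the second and third class into the half-plane cut out
  by the edge \<open>r a\<close>, so the origin would miss the hull of these two classes.\<close>
lemma colourful_triangle_from_bichromatic:
  assumes gen: "origin_generic P" and sub: "S1 \<subseteq> P" "S2 \<subseteq> P" "S3 \<subseteq> P"
    and dis: "S1 \<inter> S2 = {}" "S1 \<inter> S3 = {}" "S2 \<inter> S3 = {}" and "S3 \<noteq> {}"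
    and hull23: "0 \<in> convex hull (S2 \<union> S3)"
    and abr: "a \<in> S1" "r \<in> S1" "a \<noteq> r" "b \<in> S2" "0 \<in> convex hull {a, b, r}"
  shows "\<exists>x\<in>S1. \<exists>y\<in>S2. \<exists>z\<in>S3. 0 \<in> convex hull {x, y, z}"
proof (rule ccontr)
  assume "\<not> ?thesis"
  then have no_colourful: "0 \<notin> convex hull {x, y, z}" if "x \<in> S1" "y \<in> S2" "z \<in> S3" for x y z
    using that by blast
  have beyond_S3: "0 \<in> convex hull {c, r, a}" if c: "c \<in> S3" for c
  proof -
    have "0 \<in> convex hull {c, a, b} \<or> 0 \<in> convex hull {c, b, r} \<or> 0 \<in> convex hull {c, r, a}"
      by (rule origin_generic_exchange[OF gen]) (use c abr sub dis in auto)
    moreover have "{c, a, b} = {a, b, c}" "{c, b, r} = {r, b, c}"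
      by auto
    ultimately show ?thesis
      using no_colourful abr c by metis
  qed
  obtain c0 where c0: "c0 \<in> S3"
    using \<open>S3 \<noteq> {}\<close> by blast
  have beyond_S2: "0 \<in> convex hull {b', r, a}" if b': "b' \<in> S2" for b'
  proof -
    have "0 \<in> convex hull {b', c0, r} \<or> 0 \<in> convex hull {b', r, a} \<or> 0 \<in> convex hull {b', a, c0}"
      by (rule origin_generic_exchange[OF gen]) (use b' c0 abr sub dis beyond_S3 in auto)
    moreover have "{b', c0, r} = {r, b', c0}" "{b', a, c0} = {a, b', c0}"
      by auto
    ultimately show ?thesis
      using no_colourful abr b' c0 by metis
  qed
  have "0 \<notin> convex hull (S2 \<union> S3)"
    by (rule origin_outside_hull_if_all_wind[OF gen, of r a])
       (use abr sub dis beyond_S2 beyond_S3 in auto)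
  then show False
    using hull23 by contradiction
qed

lemma colourful_triangle_exists:
  assumes gen: "origin_generic P" "0 \<notin> P" and sub: "S1 \<subseteq> P" "S2 \<subseteq> P" "S3 \<subseteq> P"
    and dis: "S1 \<inter> S2 = {}" "S1 \<inter> S3 = {}" "S2 \<inter> S3 = {}"
    and ne: "S1 \<noteq> {}" "S2 \<noteq> {}" "S3 \<noteq> {}"
    and hull: "0 \<in> convex hull (S1 \<union> S2)" "0 \<in> convex hull (S1 \<union> S3)" "0 \<in> convex hull (S2 \<union> S3)"
  shows "\<exists>x\<in>S1. \<exists>y\<in>S2. \<exists>z\<in>S3. 0 \<in> convex hull {x, y, z}"
proof -
  obtain a b r where abr: "a \<in> S1" "b \<in> S2" "r \<in> S1 \<union> S2" "r \<noteq> a" "r \<noteq> b"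
    "0 \<in> convex hull {a, b, r}"
    using bichromatic_triangle[OF gen sub(1,2) dis(1) ne(1,2) hull(1)] by blast
  show ?thesis
  proof (cases "r \<in> S1")
    case True
    then show ?thesis
      using colourful_triangle_from_bichromatic[OF gen(1) sub dis ne(3) hull(3) abr(1) _ abr(4)[symmetric]
          abr(2,6)] by blast
  next
    case False
    then have "r \<in> S2"
      using abr(3) by blast
    moreover have "S2 \<inter> S1 = {}" "0 \<in> convex hull {b, a, r}"
      using dis(1) abr(6) by (auto simp: insert_commute)
    ultimately obtain y x z where "y \<in> S2" "x \<in> S1" "z \<in> S3" "0 \<in> convex hull {y, x, z}"
      using colourful_triangle_from_bichromatic[OF gen(1) sub(2,1,3) _ dis(3,2) ne(3) hull(2) abr(2) _
          abr(5)[symmetric] abr(1)] by blast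
    moreover have "{y, x, z} = {x, y, z}"
      by auto
    ultimately show ?thesis
      by auto
  qed
qed

text \<open>Ray casting.  \<open>crosses_ray x y\<close> says that the segment from \<open>x\<close> to \<open>y\<close> crosses the positive
  first axis (points on the axis count as lying below it).  The origin lies in a triangle iff
  its boundary crosses this ray an odd number of times.\<close>
definition crosses_ray :: "real^2 \<Rightarrow> real^2 \<Rightarrow> bool" where
  "crosses_ray x y \<longleftrightarrow> (0 < x$2 \<longleftrightarrow> \<not> 0 < y$2) \<and> (0 < det2 x y \<longleftrightarrow> 0 < y$2)"

lemma no_cycle_in_upper_halfplane:
  assumes "0 \<le> a$2" "0 \<le> b$2" "0 \<le> c$2" "0 < det2 a b" "0 < det2 b c" "0 < det2 c a"
  shows False
proof -
  have "det2 b c * a$2 + det2 c a * b$2 + det2 a b * c$2 = 0"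
    by (simp add: det2_def algebra_simps)
  moreover have "0 \<le> det2 b c * a$2" "0 \<le> det2 c a * b$2" "0 \<le> det2 a b * c$2"
    using assms by simp_all
  ultimately have "a$2 = 0" "b$2 = 0"
    using assms by (simp_all add: add_nonneg_eq_0_iff)
  then show False
    using assms(4) by (simp add: det2_def)
qed

definition flip_up :: "real^2 \<Rightarrow> real^2" where
  "flip_up x = (if 0 < x$2 then x else - x)"

lemma det2_flip_up:
  "det2 (flip_up x) (flip_up y) = (if (0 < x$2) = (0 < y$2) then det2 x y else - det2 x y)"
  by (simp add: flip_up_def det2_def)

lemma no_cycle_flip_up:
  "\<not> (0 < det2 (flip_up x) (flip_up y) \<and> 0 < det2 (flip_up y) (flip_up z) \<and> 0 < det2 (flip_up z) (flip_up x))"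
  using no_cycle_in_upper_halfplane[of "flip_up x" "flip_up y" "flip_up z"] by (auto simp: flip_up_def)

lemma winds_parity:
  assumes "det2 x y \<noteq> 0" "det2 y z \<noteq> 0" "det2 z x \<noteq> 0"
  shows "winds x y z \<longleftrightarrow> (crosses_ray x y \<noteq> (crosses_ray y z \<noteq> crosses_ray z x))"
proof -
  have neg: "0 < - det2 x y \<longleftrightarrow> \<not> 0 < det2 x y" "0 < - det2 y z \<longleftrightarrow> \<not> 0 < det2 y z"
    "0 < - det2 z x \<longleftrightarrow> \<not> 0 < det2 z x"
    using assms by linarith+
  show ?thesis
    using no_cycle_flip_up[of x y z] no_cycle_flip_up[of x z y] neg
    unfolding det2_flip_up det2_swap[of z x] det2_swap[of y z] det2_swap[of x y] minus_minus
      winds_def crosses_ray_def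
    by (smt (verit))
qed

text \<open>Parity in a box: among the eight triangles \<open>x y z\<close> with \<open>x \<in> {a, a'}\<close>, \<open>y \<in> {b, b'}\<close>,
  \<open>z \<in> {c, c'}\<close> an even number wind around the origin, since in the sum of the parities each
  edge crossing is counted twice.\<close>
lemma box_second_winding:
  assumes nz: "\<forall>x\<in>{a, a'}. \<forall>y\<in>{b, b'}. \<forall>z\<in>{c, c'}. det2 x y \<noteq> 0 \<and> det2 y z \<noteq> 0 \<and> det2 z x \<noteq> 0"
    and "a \<noteq> a'" "b \<noteq> b'" "c \<noteq> c'" and "winds a b c"
  shows "\<exists>x\<in>{a, a'}. \<exists>y\<in>{b, b'}. \<exists>z\<in>{c, c'}. (x, y, z) \<noteq> (a, b, c) \<and> winds x y z"
proof (rule ccontr)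
  assume "\<not> ?thesis"
  then have "\<not> winds a b c'" "\<not> winds a b' c" "\<not> winds a b' c'" "\<not> winds a' b c"
    "\<not> winds a' b c'" "\<not> winds a' b' c" "\<not> winds a' b' c'"
    using assms(2-4) by auto
  moreover have "winds x y z \<longleftrightarrow> (crosses_ray x y \<noteq> (crosses_ray y z \<noteq> crosses_ray z x))"
    if "x \<in> {a, a'}" "y \<in> {b, b'}" "z \<in> {c, c'}" for x y z
    using nz that winds_parity by blast
  ultimately show False
    using \<open>winds a b c\<close> by (smt (verit) insertCI)
qed

lemma exists_avoiding_two:
  assumes "finite S" "3 \<le> card S"
  shows "\<exists>z\<in>S. z \<noteq> u \<and> z \<noteq> v"
proof -
  have "\<not> S \<subseteq> {u, v}"
  proof
    assume "S \<subseteq> {u, v}"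
    then have "card S \<le> card {u, v}"
      by (rule card_mono[rotated]) simp
    also have "\<dots> \<le> 2"
      by (simp add: card_insert_if)
    finally show False
      using assms(2) by simp
  qed
  then show ?thesis
    by blast
qed

text \<open>The colourful triangles around the origin come in even numbers inside every box, so as
  soon as one exists there are at least three: if there were at most one other, a box through
  the first one avoiding the vertices of the other would contain exactly one.\<close>
lemma three_colourful_if_one:
  assumes gen: "origin_generic P" and sub: "S1 \<subseteq> P" "S2 \<subseteq> P" "S3 \<subseteq> P"
    and dis: "S1 \<inter> S2 = {}" "S1 \<inter> S3 = {}" "S2 \<inter> S3 = {}"
    and fin: "finite S1" "finite S2" "finite S3"
    and card: "3 \<le> card S1" "3 \<le> card S2" "3 \<le> card S3"
    and one: "\<exists>x\<in>S1. \<exists>y\<in>S2. \<exists>z\<in>S3. 0 \<in> convex hull {x, y, z}"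
  shows "3 \<le> colourful_count S1 S2 S3"
proof (rule ccontr)
  define T where "T = {(x1, x2, x3). x1 \<in> S1 \<and> x2 \<in> S2 \<and> x3 \<in> S3 \<and> 0 \<in> convex hull {x1, x2, x3}}"
  have nz: "det2 x y \<noteq> 0 \<and> det2 y z \<noteq> 0 \<and> det2 z x \<noteq> 0" if "x \<in> S1" "y \<in> S2" "z \<in> S3" for x y z
    using that sub dis origin_generic_det2[OF gen] by blast
  have in_T: "(x, y, z) \<in> T \<longleftrightarrow> winds x y z" if "x \<in> S1" "y \<in> S2" "z \<in> S3" for x y z
    using that nz[OF that] origin_in_triangle_iff_winds unfolding T_def by blast
  have "finite T"
    by (rule finite_subset[of _ "S1 \<times> S2 \<times> S3"]) (auto simp: T_def fin)
  obtain a b c where abc: "a \<in> S1" "b \<in> S2" "c \<in> S3" "(a, b, c) \<in> T"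
    using one unfolding T_def by blast
  assume "\<not> 3 \<le> colourful_count S1 S2 S3"
  then have "card T \<le> 2"
    unfolding colourful_count_def T_def by simp
  then obtain p q r where pqr: "T \<subseteq> {(a, b, c), (p, q, r)}"
    using subset_pair_if_card_le_2[OF \<open>finite T\<close> _ abc(4)] by auto
  obtain a' b' c' where a': "a' \<in> S1" "a' \<noteq> a" "a' \<noteq> p" and b': "b' \<in> S2" "b' \<noteq> b" "b' \<noteq> q"
    and c': "c' \<in> S3" "c' \<noteq> c" "c' \<noteq> r"
    using exists_avoiding_two fin card by meson
  have "\<exists>x\<in>{a, a'}. \<exists>y\<in>{b, b'}. \<exists>z\<in>{c, c'}. (x, y, z) \<noteq> (a, b, c) \<and> winds x y z"
    by (rule box_second_winding) (use nz in_T abc a' b' c' in auto)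
  then obtain x y z where "x \<in> {a, a'}" "y \<in> {b, b'}" "z \<in> {c, c'}" "(x, y, z) \<noteq> (a, b, c)"
    "(x, y, z) \<in> T"
    using in_T abc a' b' c' by blast
  then show False
    using pqr a' b' c' by auto
qed

lemma collinear_0_iff_det2: "collinear {0, u, v} \<longleftrightarrow> det2 u v = 0"
proof
  assume "collinear {0, u, v}"
  then show "det2 u v = 0"
    by (auto simp: collinear_lemma det2_def)
next
  assume det: "det2 u v = 0"
  show "collinear {0, u, v}"
  proof (cases "u = 0")
    case True
    then show ?thesis
      by (simp add: collinear_2)
  next
    case False
    have "\<exists>c. v = c *\<^sub>R u"
    proof (cases "u$1 = 0")
      case True
      then have "u$2 \<noteq> 0"
        using False by (auto simp: vec2_eq_iff)
      then show ?thesis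
        using det True by (intro exI[of _ "v$2 / u$2"]) (auto simp: vec2_eq_iff det2_def field_simps)
    next
      case False
      then show ?thesis
        using det by (intro exI[of _ "v$1 / u$1"]) (auto simp: vec2_eq_iff det2_def field_simps)
    qed
    then show ?thesis
      by (simp add: collinear_lemma)
  qed
qed

lemma origin_generic_if_gen_pos2:
  assumes gp: "gen_pos2 (Q \<union> {0})" and "0 \<notin> Q"
  shows "origin_generic Q"
  unfolding origin_generic_def
proof (intro ballI impI)
  fix u v assume uv: "u \<in> Q" "v \<in> Q" "u \<noteq> v"
  then have "\<not> affine_dependent {0, u, v}"
    using gp \<open>0 \<notin> Q\<close> unfolding gen_pos2_def by (auto simp: card_insert_if)
  then have "\<not> collinear {0, u, v}"
    using uv \<open>0 \<notin> Q\<close> by (auto simp: collinear_3_eq_affine_dependent)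
  then show "det2 u v \<noteq> 0"
    by (simp add: collinear_0_iff_det2)
qed

lemma gen_pos2_if_det2_nonzero:
  assumes "finite Q" and nz: "\<forall>x\<in>Q. \<forall>y\<in>Q. \<forall>z\<in>Q. x \<noteq> y \<and> y \<noteq> z \<and> x \<noteq> z \<longrightarrow> det2 (x - y) (z - y) \<noteq> 0"
  shows "gen_pos2 Q"
  unfolding gen_pos2_def
proof (intro allI impI)
  fix T assume T: "T \<subseteq> Q \<and> card T \<le> 3"
  then have "card T \<le> 2 \<or> card T = 3"
    by linarith
  then show "\<not> affine_dependent T"
  proof
    assume "card T \<le> 2"
    show ?thesis
    proof (cases "T = {}")
      case False
      then obtain t where "t \<in> T"
        by blast
      moreover have "finite T"
        using T \<open>finite Q\<close> finite_subset by blast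
      ultimately obtain t' where "t' \<in> T" "T \<subseteq> {t, t'}"
        using subset_pair_if_card_le_2[OF \<open>finite T\<close> \<open>card T \<le> 2\<close>] by blast
      then have "T = {t, t'}"
        using \<open>t \<in> T\<close> by blast
      then show ?thesis
        by simp
    qed simp
  next
    assume "card T = 3"
    then obtain x y z where xyz: "T = {x, y, z}" "x \<noteq> y" "y \<noteq> z" "x \<noteq> z"
      by (auto simp: card_3_iff)
    have "x \<in> Q" "y \<in> Q" "z \<in> Q"
      using xyz T by auto
    then have "det2 (x - y) (z - y) \<noteq> 0"
      using nz xyz(2-4) by blast
    then have "\<not> collinear {x, y, z}"
      by (simp add: collinear_3 collinear_0_iff_det2)
    then show ?thesis
      using xyz by (simp add: collinear_3_eq_affine_dependent)
  qed
qed

lemma admissible_colourful_count_ge_3: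
  assumes "admissible_config S1 S2 S3"
  shows "3 \<le> colourful_count S1 S2 S3"
proof -
  define P where "P = S1 \<union> S2 \<union> S3"
  have card: "card S1 = 3" "card S2 = 3" "card S3 = 3"
    and dis: "S1 \<inter> S2 = {}" "S1 \<inter> S3 = {}" "S2 \<inter> S3 = {}"
    and "0 \<notin> P" and gp: "gen_pos2 (P \<union> {0})"
    and hull: "0 \<in> convex hull (S1 \<union> S2)" "0 \<in> convex hull (S1 \<union> S3)" "0 \<in> convex hull (S2 \<union> S3)"
    using assms unfolding admissible_config_def P_def by auto
  have gen: "origin_generic P"
    using origin_generic_if_gen_pos2[OF gp \<open>0 \<notin> P\<close>] .
  have sub: "S1 \<subseteq> P" "S2 \<subseteq> P" "S3 \<subseteq> P"
    unfolding P_def by auto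
  have fin: "finite S1" "finite S2" "finite S3"
    using card by (auto intro: card_ge_0_finite)
  have "S1 \<noteq> {}" "S2 \<noteq> {}" "S3 \<noteq> {}"
    using card by auto
  then have "\<exists>x\<in>S1. \<exists>y\<in>S2. \<exists>z\<in>S3. 0 \<in> convex hull {x, y, z}"
    using colourful_triangle_exists[OF gen \<open>0 \<notin> P\<close> sub dis] hull by blast
  then show ?thesis
    using three_colourful_if_one[OF gen sub dis fin] card by simp
qed

text \<open>An admissible configuration with exactly three colourful triangles around the origin:
  all three contain the points \<open>(-2, 0)\<close> and \<open>(1, -1)\<close>.\<close>
definition example_S1 :: "(real^2) set" where
  "example_S1 = {vector [4, -1], vector [2, 4], vector [-2, 0]}"

definition example_S2 :: "(real^2) set" where
  "example_S2 = {vector [-4, 2], vector [3, 1], vector [1, -1]}"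

definition example_S3 :: "(real^2) set" where
  "example_S3 = {vector [3, 2], vector [-2, 3], vector [1, 4]}"

lemma vector2_eq_iff: "(vector [a, b] :: real^2) = vector [c, d] \<longleftrightarrow> a = c \<and> b = d"
  by (simp add: vec2_eq_iff)

lemma zero_vector2: "(0 :: real^2) = vector [0, 0]"
  by (simp add: vec2_eq_iff)

lemma diff_vector2: "(vector [a, b] :: real^2) - vector [c, d] = vector [a - c, b - d]"
  by (simp add: vec2_eq_iff)

lemma det2_vector2: "det2 (vector [a, b]) (vector [c, d]) = a * d - b * c"
  by (simp add: det2_def)

lemma origin_in_hull_if_winds:
  assumes "det2 x y \<noteq> 0" "det2 y z \<noteq> 0" "det2 z x \<noteq> 0" "winds x y z" "{x, y, z} \<subseteq> S"
  shows "0 \<in> convex hull S"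
  using origin_in_triangle_iff_winds[OF assms(1-3)] assms(4) hull_mono[OF assms(5)] by blast

lemma example_admissible: "admissible_config example_S1 example_S2 example_S3"
proof -
  have "gen_pos2 (example_S1 \<union> example_S2 \<union> example_S3 \<union> {0})"
    by (rule gen_pos2_if_det2_nonzero)
       (simp_all add: example_S1_def example_S2_def example_S3_def zero_vector2 vector2_eq_iff
         diff_vector2 det2_vector2)
  moreover have "0 \<in> convex hull (example_S1 \<union> example_S2)" "0 \<in> convex hull (example_S1 \<union> example_S3)"
    by (rule origin_in_hull_if_winds[of "vector [4, -1]" "vector [2, 4]" "vector [-2, 0]"];
        simp add: det2_vector2 winds_def example_S1_def)+
  moreover have "0 \<in> convex hull (example_S2 \<union> example_S3)"
    by (rule origin_in_hull_if_winds[of "vector [-4, 2]" "vector [3, 1]" "vector [1, -1]"])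
       (simp_all add: det2_vector2 winds_def example_S2_def)
  ultimately show ?thesis
    unfolding admissible_config_def
    by (simp add: example_S1_def example_S2_def example_S3_def vector2_eq_iff zero_vector2)
qed

lemma example_colourful_count: "colourful_count example_S1 example_S2 example_S3 = 3"
proof -
  have nz: "det2 x y \<noteq> 0 \<and> det2 y z \<noteq> 0 \<and> det2 z x \<noteq> 0"
    if "x \<in> example_S1" "y \<in> example_S2" "z \<in> example_S3" for x y z
    using that by (auto simp: example_S1_def example_S2_def example_S3_def det2_vector2)
  have "{(x1, x2, x3). x1 \<in> example_S1 \<and> x2 \<in> example_S2 \<and> x3 \<in> example_S3 \<and> 0 \<in> convex hull {x1, x2, x3}}
      = {(x1, x2, x3). x1 \<in> example_S1 \<and> x2 \<in> example_S2 \<and> x3 \<in> example_S3 \<and> winds x1 x2 x3}"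
    using origin_in_triangle_iff_winds nz by blast
  also have "\<dots> = {(vector [-2, 0], vector [1, -1], vector [3, 2]),
                    (vector [-2, 0], vector [1, -1], vector [-2, 3]),
                    (vector [-2, 0], vector [1, -1], vector [1, 4])}"
    by (auto simp: example_S1_def example_S2_def example_S3_def winds_def det2_vector2)
  finally show ?thesis
    unfolding colourful_count_def by (simp add: vector2_eq_iff)
qed

theorem mainTheorem3:
  shows "(\<forall>S1 S2 S3. admissible_config S1 S2 S3 \<longrightarrow> 3 \<le> colourful_count S1 S2 S3) \<and>
         (\<exists>S1 S2 S3. admissible_config S1 S2 S3 \<and> colourful_count S1 S2 S3 = 3)"
proof
  show "\<forall>S1 S2 S3. admissible_config S1 S2 S3 \<longrightarrow> 3 \<le> colourful_count S1 S2 S3"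
    using admissible_colourful_count_ge_3 by blast
  show "\<exists>S1 S2 S3. admissible_config S1 S2 S3 \<and> colourful_count S1 S2 S3 = 3"
    using example_admissible example_colourful_count by blast
qed

end
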